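(* Let $R$ be a commutative ring in which $2$ is invertible and let $Q$ be a free $R$-module of rank $n$ with a fixed ordered basis. Let $\varphi'$ and $\varphi^*$ be invertible symmetric $n\times n$ matrices defining quadratic forms on $Q$ (giving quadratic spaces $Q_{\varphi'}$, $Q_{\varphi^*}$), with $\varphi'=\epsilon^t\varphi^*\epsilon$ for some $\epsilon\in\mathrm{GL}_n(R)$. Let $m\ge1$ and identify automorphisms of $Q\perp\mathbb{H}(R)^m$ with $(n+2m)\times(n+2m)$ matrices via the basis of $Q$ followed by $x_1,\dots,x_m,f_1,\dots,f_m$. Then $\mathrm{EO}_R(Q_{\varphi'},\mathbb{H}(R)^m)=(\epsilon^{-1}\perp I_{2m})\,\mathrm{EO}_R(Q_{\varphi^*},\mathbb{H}(R)^m)\,(\epsilon\perp I_{2m})$.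
   Context: For an invertible symmetric matrix $\varphi$ on $Q$, $\langle a,b\rangle_\varphi=a^t\varphi b$ in coordinates and $q_\varphi(a)=\tfrac12\langle a,a\rangle_\varphi$. $\mathbb{H}(R)^m=\mathbb{H}(P)$ with $P=R^m$, $\mathbb{H}(P)=P\oplus P^*$, basis $x_1,\dots,x_m$ of $P$, dual basis $f_1,\dots,f_m$, form $q(y,g)=g(y)$. DSER transformations on $Q_\varphi\perp\mathbb{H}(P)$: for $R$-linear $\alpha:Q\to P$ let $\alpha^*:P^*\to Q$ satisfy $\langle\alpha^*(g),z\rangle_\varphi=g(\alpha(z))$ for all $z$, and $E_\alpha(z,y,g)=(z-\alpha^*(g),y+\alpha(z)-\tfrac12\alpha\alpha^*(g),g)$; for $\beta:Q\to P^*$ let $\beta^*:P\to Q$ satisfy $\langle\beta^*(y),z\rangle_\varphi=\beta(z)(y)$, and $E^*_\beta(z,y,g)=(z-\beta^*(y),y,g+\beta(z)-\tfrac12\beta\beta^*(y))$. $\mathrm{EO}_R(Q_\varphi,\mathbb{H}(P))$ is the group generated by all $E_\alpha,E^*_\beta$. *)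

theory Defs
  imports "Jordan_Normal_Form.Matrix"
begin

definition half :: "'a::comm_ring_1" where
  "half = (SOME h. 2 * h = 1)"

definition bilin :: "'a::comm_ring_1 mat \<Rightarrow> 'a vec \<Rightarrow> 'a vec \<Rightarrow> 'a" where
  "bilin phi a b = a \<bullet> (phi *\<^sub>v b)"

definition inv_sym_mat :: "nat \<Rightarrow> 'a::comm_ring_1 mat \<Rightarrow> bool" where
  "inv_sym_mat n phi \<longleftrightarrow> phi \<in> carrier_mat n n \<and> transpose_mat phi = phi \<and> invertible_mat phi"

(* coordinates of a vector of Q \<perp> H(P): (z, y, g), z \<in> R^n, y \<in> P = R^m (basis x_i),
   g \<in> P^* (coordinates in the dual basis f_i) *)
definition zpart :: "nat \<Rightarrow> nat \<Rightarrow> 'a vec \<Rightarrow> 'a vec" where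
  "zpart n m v = vec n (\<lambda>i. v $ i)"
definition ypart :: "nat \<Rightarrow> nat \<Rightarrow> 'a vec \<Rightarrow> 'a vec" where
  "ypart n m v = vec m (\<lambda>i. v $ (n + i))"
definition gpart :: "nat \<Rightarrow> nat \<Rightarrow> 'a vec \<Rightarrow> 'a vec" where
  "gpart n m v = vec m (\<lambda>i. v $ (n + m + i))"

definition mat_of_map :: "nat \<Rightarrow> ('a::zero_neq_one vec \<Rightarrow> 'a vec) \<Rightarrow> 'a mat" where
  "mat_of_map N f = mat N N (\<lambda>(i,j). f (unit_vec N j) $ i)"

(* E_alpha, where A is the matrix of alpha : Q \<rightarrow> P and As the matrix of alpha^* : P^* \<rightarrow> Q *)
definition E_map :: "nat \<Rightarrow> nat \<Rightarrow> 'a::comm_ring_1 mat \<Rightarrow> 'a mat \<Rightarrow> 'a vec \<Rightarrow> 'a vec" where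
  "E_map n m A As v =
     (let z = zpart n m v; y = ypart n m v; g = gpart n m v in
      (z - As *\<^sub>v g) @\<^sub>v (y + A *\<^sub>v z - half \<cdot>\<^sub>v (A *\<^sub>v (As *\<^sub>v g))) @\<^sub>v g)"

(* E^*_beta, where B is the matrix of beta : Q \<rightarrow> P^* and Bs the matrix of beta^* : P \<rightarrow> Q *)
definition Estar_map :: "nat \<Rightarrow> nat \<Rightarrow> 'a::comm_ring_1 mat \<Rightarrow> 'a mat \<Rightarrow> 'a vec \<Rightarrow> 'a vec" where
  "Estar_map n m B Bs v =
     (let z = zpart n m v; y = ypart n m v; g = gpart n m v in
      (z - Bs *\<^sub>v y) @\<^sub>v y @\<^sub>v (g + B *\<^sub>v z - half \<cdot>\<^sub>v (B *\<^sub>v (Bs *\<^sub>v y))))"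

definition EO_gens :: "nat \<Rightarrow> nat \<Rightarrow> 'a::comm_ring_1 mat \<Rightarrow> 'a mat set" where
  "EO_gens n m phi =
     {mat_of_map (n + 2*m) (E_map n m A As) | A As.
        A \<in> carrier_mat m n \<and> As \<in> carrier_mat n m \<and>
        (\<forall>g \<in> carrier_vec m. \<forall>z \<in> carrier_vec n. bilin phi (As *\<^sub>v g) z = g \<bullet> (A *\<^sub>v z))}
   \<union> {mat_of_map (n + 2*m) (Estar_map n m B Bs) | B Bs.
        B \<in> carrier_mat m n \<and> Bs \<in> carrier_mat n m \<and>
        (\<forall>y \<in> carrier_vec m. \<forall>z \<in> carrier_vec n. bilin phi (Bs *\<^sub>v y) z = (B *\<^sub>v z) \<bullet> y)}"

inductive_set EO :: "nat \<Rightarrow> nat \<Rightarrow> 'a::comm_ring_1 mat \<Rightarrow> 'a mat set"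
  for n m :: nat and phi :: "'a mat" where
  EO_one: "1\<^sub>m (n + 2*m) \<in> EO n m phi"
| EO_gen: "M \<in> EO_gens n m phi \<Longrightarrow> M \<in> EO n m phi"
| EO_mult: "M \<in> EO n m phi \<Longrightarrow> N \<in> EO n m phi \<Longrightarrow> M * N \<in> EO n m phi"
| EO_inv: "M \<in> EO n m phi \<Longrightarrow> N \<in> carrier_mat (n + 2*m) (n + 2*m) \<Longrightarrow>
           M * N = 1\<^sub>m (n + 2*m) \<Longrightarrow> N * M = 1\<^sub>m (n + 2*m) \<Longrightarrow> N \<in> EO n m phi"

definition bdiag_id :: "nat \<Rightarrow> nat \<Rightarrow> 'a::comm_ring_1 mat \<Rightarrow> 'a mat" where
  "bdiag_id n m A = four_block_mat A (0\<^sub>m n (2*m)) (0\<^sub>m (2*m) n) (1\<^sub>m (2*m))"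

end

theory Submission
  imports Defs
begin

(* Write D(e) for e \<perp> I_2m. Conjugation by D(e) only changes the coordinates of Q, so
   D(e^-1) E_alpha D(e) = E_(alpha e) and D(e^-1) E*_beta D(e) = E*_(beta e), with the adjoints
   replaced by e^-1 alpha^* and e^-1 beta^*. If phi' = e^t phi e, then e^-1 alpha^* is the
   phi'-adjoint of alpha e, so this conjugation maps generators of EO(phi) to generators of
   EO(phi') and hence EO(phi) into EO(phi'). Since phi = (e^-1)^t phi' e^-1, conjugating
   back by D(e) gives the reverse inclusion. *)

lemma mult_mat_vec_smult:
  fixes A :: "'a::comm_semiring_0 mat"
  assumes "A \<in> carrier_mat nr nc" "v \<in> carrier_vec nc"
  shows "A *\<^sub>v (k \<cdot>\<^sub>v v) = k \<cdot>\<^sub>v (A *\<^sub>v v)"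
  using assms by (intro eq_vecI) auto

lemma mult_mat_vec_right_inverse:
  fixes e ei :: "'a::comm_ring_1 mat"
  assumes "e \<in> carrier_mat n n" "ei \<in> carrier_mat n n" "e * ei = 1\<^sub>m n" "w \<in> carrier_vec n"
  shows "e *\<^sub>v (ei *\<^sub>v w) = w"
  using assms by (metis assoc_mult_mat_vec one_mult_mat_vec)

lemma similar_mat_mult:
  fixes P Q X Y :: "'a::comm_ring_1 mat"
  assumes P: "P \<in> carrier_mat N N" and Q: "Q \<in> carrier_mat N N" and QP: "Q * P = 1\<^sub>m N"
    and X: "X \<in> carrier_mat N N" and Y: "Y \<in> carrier_mat N N"
  shows "P * (X * Y) * Q = (P * X * Q) * (P * Y * Q)"
proof -
  have "(P * X * Q) * (P * Y * Q) = P * X * (Q * P) * Y * Q"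
    using P Q X Y by (simp add: assoc_mult_mat[of _ N N _ N _ N])
  then show ?thesis using P Q X Y QP by (simp add: assoc_mult_mat[of _ N N _ N _ N])
qed

lemma similar_mat_cancel:
  fixes P Q M :: "'a::comm_ring_1 mat"
  assumes P: "P \<in> carrier_mat N N" and Q: "Q \<in> carrier_mat N N" and PQ: "P * Q = 1\<^sub>m N"
    and M: "M \<in> carrier_mat N N"
  shows "P * (Q * M * P) * Q = M"
proof -
  have QM: "Q * M \<in> carrier_mat N N" using Q M by simp
  have "P * (Q * M * P) * Q = P * (Q * M * (P * Q))"
    using P QM Q by (simp add: assoc_mult_mat[of _ N N _ N _ N])
  also have "\<dots> = P * (Q * M)" using QM PQ by (simp add: right_mult_one_mat)
  also have "\<dots> = (P * Q) * M" using P Q M by simp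
  also have "\<dots> = M" unfolding PQ using M by simp
  finally show ?thesis .
qed

lemma congruent_mat_inverse:
  fixes e ei phi :: "'a::comm_ring_1 mat"
  assumes "phi \<in> carrier_mat n n" "e \<in> carrier_mat n n" "ei \<in> carrier_mat n n" "e * ei = 1\<^sub>m n"
  shows "transpose_mat ei * (transpose_mat e * phi * e) * ei = phi"
proof -
  have "transpose_mat ei * (transpose_mat e * phi * e) * ei
      = (transpose_mat ei * transpose_mat e) * phi * (e * ei)"
    using assms by (simp add: assoc_mult_mat[of _ n n _ n _ n])
  also have "transpose_mat ei * transpose_mat e = transpose_mat (e * ei)"
    using transpose_mult[OF assms(2,3)] by simp
  finally show ?thesis using assms by simp
qed

lemma bilin_congruence:
  fixes e phi :: "'a::comm_ring_1 mat"
  assumes e: "e \<in> carrier_mat n n" and phi: "phi \<in> carrier_mat n n"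
    and a: "a \<in> carrier_vec n" and b: "b \<in> carrier_vec n"
  shows "bilin (transpose_mat e * phi * e) a b = bilin phi (e *\<^sub>v a) (e *\<^sub>v b)"
proof -
  have "(transpose_mat e * phi * e) *\<^sub>v b = transpose_mat e *\<^sub>v (phi *\<^sub>v (e *\<^sub>v b))"
    using e phi b by (simp add: assoc_mult_mat_vec[of _ n n _ n])
  then show ?thesis
    using transpose_vec_mult_scalar[of "transpose_mat e" n n "phi *\<^sub>v (e *\<^sub>v b)" a] e phi a b
    by (simp add: bilin_def)
qed

lemma parts_carrier[simp]:
  "zpart n m v \<in> carrier_vec n" "ypart n m v \<in> carrier_vec m" "gpart n m v \<in> carrier_vec m"
  by (auto simp: zpart_def ypart_def gpart_def)

lemma parts_dim[simp]:
  "dim_vec (zpart n m v) = n" "dim_vec (ypart n m v) = m" "dim_vec (gpart n m v) = m"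
  by (auto simp: zpart_def ypart_def gpart_def)

lemma parts_append[simp]:
  assumes "z \<in> carrier_vec n" "y \<in> carrier_vec m" "g \<in> carrier_vec m"
  shows "zpart n m (z @\<^sub>v y @\<^sub>v g) = z" "ypart n m (z @\<^sub>v y @\<^sub>v g) = y"
    "gpart n m (z @\<^sub>v y @\<^sub>v g) = g"
  using assms by (auto simp: zpart_def ypart_def gpart_def)

lemma append_parts:
  assumes "v \<in> carrier_vec (n + 2*m)"
  shows "zpart n m v @\<^sub>v ypart n m v @\<^sub>v gpart n m v = v"
  using assms by (intro eq_vecI) (auto simp: zpart_def ypart_def gpart_def)

lemma parts_add:
  assumes "v \<in> carrier_vec (n + 2*m)" "w \<in> carrier_vec (n + 2*m)"
  shows "zpart n m (v + w) = zpart n m v + zpart n m w"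
    "ypart n m (v + w) = ypart n m v + ypart n m w"
    "gpart n m (v + w) = gpart n m v + gpart n m w"
  using assms by (auto simp: zpart_def ypart_def gpart_def)

lemma parts_smult:
  assumes "v \<in> carrier_vec (n + 2*m)"
  shows "zpart n m (c \<cdot>\<^sub>v v) = c \<cdot>\<^sub>v zpart n m v"
    "ypart n m (c \<cdot>\<^sub>v v) = c \<cdot>\<^sub>v ypart n m v"
    "gpart n m (c \<cdot>\<^sub>v v) = c \<cdot>\<^sub>v gpart n m v"
  using assms by (auto simp: zpart_def ypart_def gpart_def)

definition linear_on_vecs :: "nat \<Rightarrow> ('a::comm_ring_1 vec \<Rightarrow> 'a vec) \<Rightarrow> bool" where
  "linear_on_vecs N f \<longleftrightarrow>
     (\<forall>v \<in> carrier_vec N. f v \<in> carrier_vec N) \<and>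
     (\<forall>v \<in> carrier_vec N. \<forall>w \<in> carrier_vec N. f (v + w) = f v + f w) \<and>
     (\<forall>c. \<forall>v \<in> carrier_vec N. f (c \<cdot>\<^sub>v v) = c \<cdot>\<^sub>v f v)"

lemma mat_of_map_carrier[simp]: "mat_of_map N f \<in> carrier_mat N N"
  by (simp add: mat_of_map_def)

lemma mat_of_map_cong:
  "(\<And>v. v \<in> carrier_vec N \<Longrightarrow> f v = g v) \<Longrightarrow> mat_of_map N f = mat_of_map N g"
  by (auto simp: mat_of_map_def)

lemma mat_of_map_eqI:
  fixes X :: "'a::comm_ring_1 mat"
  assumes "X \<in> carrier_mat N N" and "\<And>v. v \<in> carrier_vec N \<Longrightarrow> X *\<^sub>v v = f v"
  shows "X = mat_of_map N f"
  using assms by (intro eq_matI) (auto simp: mat_of_map_def simp flip: assms(2))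

lemma mat_of_map_mult_vec:
  assumes f: "linear_on_vecs N f" and v: "v \<in> carrier_vec N"
  shows "mat_of_map N f *\<^sub>v v = f v"
proof -
  from f have f_carrier: "\<And>v. v \<in> carrier_vec N \<Longrightarrow> f v \<in> carrier_vec N"
    and f_add: "\<And>v w. v \<in> carrier_vec N \<Longrightarrow> w \<in> carrier_vec N \<Longrightarrow> f (v + w) = f v + f w"
    and f_smult: "\<And>c v. v \<in> carrier_vec N \<Longrightarrow> f (c \<cdot>\<^sub>v v) = c \<cdot>\<^sub>v f v"
    by (auto simp: linear_on_vecs_def)
  define u where "u k = vec N (\<lambda>i. if i < k then v $ i else 0)" for k
  have "k \<le> N \<Longrightarrow> f (u k) = vec N (\<lambda>i. \<Sum>j<k. f (unit_vec N j) $ i * v $ j)" for k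
  proof (induction k)
    case 0
    have "u 0 = 0 \<cdot>\<^sub>v 0\<^sub>v N" by (auto simp: u_def)
    then show ?case using f_smult[of "0\<^sub>v N" 0] f_carrier[of "0\<^sub>v N"] by auto
  next
    case (Suc k)
    have "u (Suc k) = u k + v $ k \<cdot>\<^sub>v unit_vec N k"
      using Suc.prems by (auto simp: u_def less_Suc_eq)
    then have "f (u (Suc k)) = f (u k) + v $ k \<cdot>\<^sub>v f (unit_vec N k)"
      by (simp add: f_add f_smult u_def)
    then show ?case using Suc f_carrier[of "unit_vec N k"] by (auto simp: mult.commute)
  qed
  moreover have "u N = v" using v by (auto simp: u_def)
  ultimately show ?thesis
    using v by (auto simp: mat_of_map_def scalar_prod_def row_def atLeast0LessThan)
qed

lemma mat_of_map_compose:
  fixes P Q :: "'a::comm_ring_1 mat"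
  assumes P: "P \<in> carrier_mat N N" and Q: "Q \<in> carrier_mat N N" and f: "linear_on_vecs N f"
  shows "P * mat_of_map N f * Q = mat_of_map N (\<lambda>v. P *\<^sub>v f (Q *\<^sub>v v))"
proof (rule mat_of_map_eqI)
  show "P * mat_of_map N f * Q \<in> carrier_mat N N" using P Q by auto
  fix v :: "'a vec" assume v: "v \<in> carrier_vec N"
  then have "(P * mat_of_map N f * Q) *\<^sub>v v = P *\<^sub>v (mat_of_map N f *\<^sub>v (Q *\<^sub>v v))"
    using P Q by (simp add: assoc_mult_mat_vec[of _ N N _ N])
  also have "\<dots> = P *\<^sub>v f (Q *\<^sub>v v)" using Q v by (simp add: mat_of_map_mult_vec[OF f])
  finally show "(P * mat_of_map N f * Q) *\<^sub>v v = P *\<^sub>v f (Q *\<^sub>v v)" .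
qed

lemma linear_E_map:
  assumes A: "A \<in> carrier_mat m n" and As: "As \<in> carrier_mat n m"
  shows "linear_on_vecs (n + 2*m) (E_map n m A As)"
proof -
  have "E_map n m A As (v + w) = E_map n m A As v + E_map n m A As w"
    if v: "v \<in> carrier_vec (n + 2*m)" and w: "w \<in> carrier_vec (n + 2*m)" for v w
    using A As v w unfolding E_map_def Let_def parts_add[OF v w]
    by (intro eq_vecI)
      (auto simp: mult_add_distrib_mat_vec[OF A] mult_add_distrib_mat_vec[OF As] algebra_simps)
  moreover have "E_map n m A As (c \<cdot>\<^sub>v v) = c \<cdot>\<^sub>v E_map n m A As v"
    if v: "v \<in> carrier_vec (n + 2*m)" for c v
    using A As v unfolding E_map_def Let_def parts_smult[OF v]
    by (intro eq_vecI) (auto simp: mult_mat_vec_smult[OF A] mult_mat_vec_smult[OF As] algebra_simps)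
  moreover have "E_map n m A As v \<in> carrier_vec (n + 2*m)" for v
    using A As unfolding E_map_def Let_def mult_2 by (intro append_carrier_vec) auto
  ultimately show ?thesis unfolding linear_on_vecs_def by blast
qed

lemma linear_Estar_map:
  assumes B: "B \<in> carrier_mat m n" and Bs: "Bs \<in> carrier_mat n m"
  shows "linear_on_vecs (n + 2*m) (Estar_map n m B Bs)"
proof -
  have "Estar_map n m B Bs (v + w) = Estar_map n m B Bs v + Estar_map n m B Bs w"
    if v: "v \<in> carrier_vec (n + 2*m)" and w: "w \<in> carrier_vec (n + 2*m)" for v w
    using B Bs v w unfolding Estar_map_def Let_def parts_add[OF v w]
    by (intro eq_vecI)
      (auto simp: mult_add_distrib_mat_vec[OF B] mult_add_distrib_mat_vec[OF Bs] algebra_simps)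
  moreover have "Estar_map n m B Bs (c \<cdot>\<^sub>v v) = c \<cdot>\<^sub>v Estar_map n m B Bs v"
    if v: "v \<in> carrier_vec (n + 2*m)" for c v
    using B Bs v unfolding Estar_map_def Let_def parts_smult[OF v]
    by (intro eq_vecI) (auto simp: mult_mat_vec_smult[OF B] mult_mat_vec_smult[OF Bs] algebra_simps)
  moreover have "Estar_map n m B Bs v \<in> carrier_vec (n + 2*m)" for v
    using B Bs unfolding Estar_map_def Let_def mult_2 by (intro append_carrier_vec) auto
  ultimately show ?thesis unfolding linear_on_vecs_def by blast
qed

lemma bdiag_id_carrier[simp]:
  "e \<in> carrier_mat n n \<Longrightarrow> bdiag_id n m e \<in> carrier_mat (n + 2*m) (n + 2*m)"
  unfolding bdiag_id_def by (metis four_block_carrier_mat one_carrier_mat)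

lemma bdiag_id_one[simp]: "bdiag_id n m (1\<^sub>m n) = 1\<^sub>m (n + 2*m)"
  unfolding bdiag_id_def by simp

lemma bdiag_id_mult:
  assumes "a \<in> carrier_mat n n" "b \<in> carrier_mat n n"
  shows "bdiag_id n m a * bdiag_id n m b = bdiag_id n m (a * b)"
  unfolding bdiag_id_def using assms
  by (subst mult_four_block_mat[OF assms(1) zero_carrier_mat zero_carrier_mat one_carrier_mat
        assms(2) zero_carrier_mat zero_carrier_mat one_carrier_mat]) auto

lemma bdiag_id_mult_append:
  assumes "e \<in> carrier_mat n n" "z \<in> carrier_vec n" "y \<in> carrier_vec m" "g \<in> carrier_vec m"
  shows "bdiag_id n m e *\<^sub>v (z @\<^sub>v y @\<^sub>v g) = (e *\<^sub>v z) @\<^sub>v y @\<^sub>v g"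
  using assms unfolding bdiag_id_def by (subst mult_mat_vec_split[of _ n _ "2*m"]) (auto simp: mult_2)

lemma bdiag_id_mult_vec:
  assumes "e \<in> carrier_mat n n" "v \<in> carrier_vec (n + 2*m)"
  shows "bdiag_id n m e *\<^sub>v v = (e *\<^sub>v zpart n m v) @\<^sub>v ypart n m v @\<^sub>v gpart n m v"
  using bdiag_id_mult_append[OF assms(1) parts_carrier[of n m v]] append_parts[OF assms(2)] by simp

lemma E_map_conj:
  fixes e ei :: "'a::comm_ring_1 mat"
  assumes A: "A \<in> carrier_mat m n" and As: "As \<in> carrier_mat n m"
    and e: "e \<in> carrier_mat n n" and ei: "ei \<in> carrier_mat n n"
    and inv: "ei * e = 1\<^sub>m n" "e * ei = 1\<^sub>m n" and v: "v \<in> carrier_vec (n + 2*m)"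
  shows "bdiag_id n m ei *\<^sub>v E_map n m A As (bdiag_id n m e *\<^sub>v v) = E_map n m (A * e) (ei * As) v"
  using A As e ei v
  by (simp add: bdiag_id_mult_vec bdiag_id_mult_append[OF ei] E_map_def Let_def
      mult_minus_distrib_mat_vec[OF ei] mult_mat_vec_right_inverse[OF ei e inv(1)]
      mult_mat_vec_right_inverse[OF e ei inv(2)])

lemma Estar_map_conj:
  fixes e ei :: "'a::comm_ring_1 mat"
  assumes B: "B \<in> carrier_mat m n" and Bs: "Bs \<in> carrier_mat n m"
    and e: "e \<in> carrier_mat n n" and ei: "ei \<in> carrier_mat n n"
    and inv: "ei * e = 1\<^sub>m n" "e * ei = 1\<^sub>m n" and v: "v \<in> carrier_vec (n + 2*m)"
  shows "bdiag_id n m ei *\<^sub>v Estar_map n m B Bs (bdiag_id n m e *\<^sub>v v) =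
    Estar_map n m (B * e) (ei * Bs) v"
  using B Bs e ei v
  by (simp add: bdiag_id_mult_vec bdiag_id_mult_append[OF ei] Estar_map_def Let_def
      mult_minus_distrib_mat_vec[OF ei] mult_mat_vec_right_inverse[OF ei e inv(1)]
      mult_mat_vec_right_inverse[OF e ei inv(2)])

definition adjoint_pair :: "nat \<Rightarrow> nat \<Rightarrow> 'a::comm_ring_1 mat \<Rightarrow> 'a mat \<Rightarrow> 'a mat \<Rightarrow> bool" where
  "adjoint_pair n m phi A As \<longleftrightarrow> A \<in> carrier_mat m n \<and> As \<in> carrier_mat n m \<and>
     (\<forall>g \<in> carrier_vec m. \<forall>z \<in> carrier_vec n. bilin phi (As *\<^sub>v g) z = g \<bullet> (A *\<^sub>v z))"

lemma EO_gens_adjoint_pair: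
  "EO_gens n m phi =
     {mat_of_map (n + 2*m) (E_map n m A As) | A As. adjoint_pair n m phi A As} \<union>
     {mat_of_map (n + 2*m) (Estar_map n m B Bs) | B Bs. adjoint_pair n m phi B Bs}"
proof -
  have "(\<forall>y \<in> carrier_vec m. \<forall>z \<in> carrier_vec n. bilin phi (Bs *\<^sub>v y) z = (B *\<^sub>v z) \<bullet> y) \<longleftrightarrow>
        (\<forall>y \<in> carrier_vec m. \<forall>z \<in> carrier_vec n. bilin phi (Bs *\<^sub>v y) z = y \<bullet> (B *\<^sub>v z))"
    if "B \<in> carrier_mat m n" for B Bs :: "'a mat"
    using that comm_scalar_prod[of "B *\<^sub>v _" m] by auto
  then show ?thesis unfolding EO_gens_def adjoint_pair_def by (simp cong: conj_cong)
qed

lemma adjoint_pair_congruence: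
  fixes e ei :: "'a::comm_ring_1 mat"
  assumes adj: "adjoint_pair n m phi A As" and phi: "phi \<in> carrier_mat n n"
    and e: "e \<in> carrier_mat n n" and ei: "ei \<in> carrier_mat n n" and inv: "e * ei = 1\<^sub>m n"
  shows "adjoint_pair n m (transpose_mat e * phi * e) (A * e) (ei * As)"
proof -
  have A: "A \<in> carrier_mat m n" and As: "As \<in> carrier_mat n m"
    and adjoint: "\<And>g z. g \<in> carrier_vec m \<Longrightarrow> z \<in> carrier_vec n \<Longrightarrow>
      bilin phi (As *\<^sub>v g) z = g \<bullet> (A *\<^sub>v z)"
    using adj by (auto simp: adjoint_pair_def)
  have "bilin (transpose_mat e * phi * e) ((ei * As) *\<^sub>v g) z = g \<bullet> ((A * e) *\<^sub>v z)"
    if g: "g \<in> carrier_vec m" and z: "z \<in> carrier_vec n" for g z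
  proof -
    have "bilin (transpose_mat e * phi * e) ((ei * As) *\<^sub>v g) z =
        bilin phi (e *\<^sub>v ((ei * As) *\<^sub>v g)) (e *\<^sub>v z)"
      by (rule bilin_congruence[OF e phi]) (use ei As g z in auto)
    also have "e *\<^sub>v ((ei * As) *\<^sub>v g) = As *\<^sub>v g"
      using ei As g by (simp add: mult_mat_vec_right_inverse[OF e ei inv])
    also have "bilin phi (As *\<^sub>v g) (e *\<^sub>v z) = g \<bullet> (A *\<^sub>v (e *\<^sub>v z))"
      using e g z by (simp add: adjoint)
    finally show ?thesis using A e z by simp
  qed
  then show ?thesis using A As e ei by (simp add: adjoint_pair_def)
qed

lemma EO_gens_conj:
  fixes e ei :: "'a::comm_ring_1 mat"
  assumes phi: "phi \<in> carrier_mat n n" and e: "e \<in> carrier_mat n n" and ei: "ei \<in> carrier_mat n n"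
    and inv: "ei * e = 1\<^sub>m n" "e * ei = 1\<^sub>m n" and M: "M \<in> EO_gens n m phi"
  shows "bdiag_id n m ei * M * bdiag_id n m e \<in> EO_gens n m (transpose_mat e * phi * e)"
proof -
  let ?N = "n + 2*m" and ?D = "bdiag_id n m"
  from M consider
      (E) A As where "M = mat_of_map ?N (E_map n m A As)" "adjoint_pair n m phi A As"
    | (Estar) B Bs where "M = mat_of_map ?N (Estar_map n m B Bs)" "adjoint_pair n m phi B Bs"
    unfolding EO_gens_adjoint_pair by blast
  then show ?thesis
  proof cases
    case E
    then have A: "A \<in> carrier_mat m n" and As: "As \<in> carrier_mat n m"
      by (auto simp: adjoint_pair_def)
    have "?D ei * M * ?D e = mat_of_map ?N (\<lambda>v. ?D ei *\<^sub>v E_map n m A As (?D e *\<^sub>v v))"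
      unfolding E(1) using e ei by (intro mat_of_map_compose linear_E_map A As) auto
    also have "\<dots> = mat_of_map ?N (E_map n m (A * e) (ei * As))"
      by (intro mat_of_map_cong E_map_conj[OF A As e ei inv])
    finally show ?thesis
      using adjoint_pair_congruence[OF E(2) phi e ei inv(2)] by (auto simp: EO_gens_adjoint_pair)
  next
    case Estar
    then have B: "B \<in> carrier_mat m n" and Bs: "Bs \<in> carrier_mat n m"
      by (auto simp: adjoint_pair_def)
    have "?D ei * M * ?D e = mat_of_map ?N (\<lambda>v. ?D ei *\<^sub>v Estar_map n m B Bs (?D e *\<^sub>v v))"
      unfolding Estar(1) using e ei by (intro mat_of_map_compose linear_Estar_map B Bs) auto
    also have "\<dots> = mat_of_map ?N (Estar_map n m (B * e) (ei * Bs))"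
      by (intro mat_of_map_cong Estar_map_conj[OF B Bs e ei inv])
    finally show ?thesis
      using adjoint_pair_congruence[OF Estar(2) phi e ei inv(2)] by (auto simp: EO_gens_adjoint_pair)
  qed
qed

lemma EO_carrier: "M \<in> EO n m phi \<Longrightarrow> M \<in> carrier_mat (n + 2*m) (n + 2*m)"
  by (induction rule: EO.induct) (auto simp: EO_gens_def)

lemma EO_conj:
  fixes e ei :: "'a::comm_ring_1 mat"
  assumes phi: "phi \<in> carrier_mat n n" and e: "e \<in> carrier_mat n n" and ei: "ei \<in> carrier_mat n n"
    and inv: "ei * e = 1\<^sub>m n" "e * ei = 1\<^sub>m n" and M: "M \<in> EO n m phi"
  shows "bdiag_id n m ei * M * bdiag_id n m e \<in> EO n m (transpose_mat e * phi * e)"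
proof -
  let ?P = "bdiag_id n m ei" and ?Q = "bdiag_id n m e" and ?N = "n + 2*m"
  have P: "?P \<in> carrier_mat ?N ?N" and Q: "?Q \<in> carrier_mat ?N ?N" using e ei by auto
  have PQ: "?P * ?Q = 1\<^sub>m ?N" and QP: "?Q * ?P = 1\<^sub>m ?N"
    using e ei inv by (simp_all add: bdiag_id_mult)
  note conj_mult = similar_mat_mult[OF P Q QP]
  from M show ?thesis
  proof (induction rule: EO.induct)
    case EO_one
    show ?case using P PQ EO.EO_one by simp
  next
    case (EO_gen M)
    show ?case using EO_gens_conj[OF phi e ei inv EO_gen] by (rule EO.EO_gen)
  next
    case (EO_mult M M')
    then show ?case using conj_mult[OF EO_carrier EO_carrier] EO.EO_mult by metis
  next
    case (EO_inv M M')
    have "(?P * M * ?Q) * (?P * M' * ?Q) = 1\<^sub>m ?N" "(?P * M' * ?Q) * (?P * M * ?Q) = 1\<^sub>m ?N"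
      using EO_inv P PQ by (simp_all flip: conj_mult[OF EO_carrier[OF EO_inv(1)] EO_inv(2)]
          conj_mult[OF EO_inv(2) EO_carrier[OF EO_inv(1)]])
    then show ?case using EO.EO_inv[OF EO_inv(5)] P Q EO_inv(2) by auto
  qed
qed

theorem mainTheorem13:
  fixes n m :: nat
    and phi' phis eps eps_inv :: "'a::comm_ring_1 mat"
  assumes two_inv: "\<exists>h::'a. 2 * h = 1"
    and "inv_sym_mat n phi'" and "inv_sym_mat n phis"
    and "eps \<in> carrier_mat n n" and "eps_inv \<in> carrier_mat n n"
    and "eps * eps_inv = 1\<^sub>m n" and "eps_inv * eps = 1\<^sub>m n"
    and "phi' = transpose_mat eps * phis * eps"
    and "m \<ge> 1"
  shows "EO n m phi' = {bdiag_id n m eps_inv * M * bdiag_id n m eps | M. M \<in> EO n m phis}"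
proof -
  note e = assms(4) and ei = assms(5) and inv = assms(7,6) and phi' = assms(8)
  have phis: "phis \<in> carrier_mat n n" and phi'_carrier: "phi' \<in> carrier_mat n n"
    using assms(2,3) by (auto simp: inv_sym_mat_def)
  then have phis_eq: "phis = transpose_mat eps_inv * phi' * eps_inv"
    unfolding phi' using congruent_mat_inverse[OF phis e ei inv(2)] by simp
  let ?P = "bdiag_id n m eps_inv" and ?Q = "bdiag_id n m eps" and ?N = "n + 2*m"
  have "M = ?P * (?Q * M * ?P) * ?Q" if "M \<in> carrier_mat ?N ?N" for M
    using similar_mat_cancel[OF _ _ _ that] e ei inv by (simp add: bdiag_id_mult)
  moreover have "?Q * M * ?P \<in> EO n m phis" if "M \<in> EO n m phi'" for M
    using EO_conj[OF phi'_carrier ei e inv(2,1) that] by (simp flip: phis_eq)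
  moreover have "?P * M * ?Q \<in> EO n m phi'" if "M \<in> EO n m phis" for M
    using EO_conj[OF phis e ei inv that] by (simp flip: phi')
  ultimately show ?thesis using EO_carrier by blast
qed

end
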